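(* Let $q=p^s$ with $p$ prime, $R_T=\mathbb{F}_q[T]$, $P\in R_T$ monic irreducible of degree $d$, and $n,\alpha\in\mathbb{N}$ with $n\ge1$. Let $v_n(\alpha)$ be the number of distinct cyclic subgroups of order $p^n$ of the group $(R_T/(P^{\alpha}))^{\ast}$. Then \[ v_n(\alpha)=\frac{q^{d\left(\alpha-\lceil \alpha/p^n\rceil\right)}-q^{d\left(\alpha-\lceil\alpha/p^{n-1}\rceil\right)}}{p^{n-1}(p-1)} =\frac{q^{d\left(\alpha-\lceil\alpha/p^{n-1}\rceil\right)}\left(q^{d\left(\lceil\alpha/p^{n-1}\rceil-\lceil\alpha/p^{n}\rceil\right)}-1\right)}{p^{n-1}(p-1)}, \] where $\lceil x\rceil$ is the least integer $\geq x$. *)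

theory Defs
  imports "HOL-Algebra.Generated_Groups" "HOL-Computational_Algebra.Polynomial"
    "HOL-Computational_Algebra.Polynomial_Factorial"
begin

text \<open>Multiplicative monoid of the quotient ring F_q[T]/(M): residues are the reduced
  representatives f with f mod M = f; operations are reduced mod M.\<close>
definition quot_poly_ring :: "'a::field poly \<Rightarrow> 'a poly monoid" where
  "quot_poly_ring M =
     \<lparr>carrier = {f. f mod M = f},
      monoid.mult = (\<lambda>f g. (f * g) mod M),
      one = 1 mod M\<rparr>"

definition quot_units :: "'a::field poly \<Rightarrow> 'a poly monoid" where
  "quot_units M = units_of (quot_poly_ring M)"

definition num_cyclic_subgroups :: "('b, 'c) monoid_scheme \<Rightarrow> nat \<Rightarrow> nat" where
  "num_cyclic_subgroups G k =
     card {H. (\<exists>x\<in>carrier G. H = generate G {x}) \<and> card H = k}"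

end

theory Submission
  imports Defs "HOL-Algebra.Multiplicative_Group" "HOL-Number_Theory.Residues"
begin

text \<open>
  An element of order \<open>k\<close> generates a cyclic subgroup of order \<open>k\<close> with exactly \<open>\<phi>(k)\<close>
  generators, so \<open>\<phi>(p^n)\<close> times the number of cyclic subgroups of order \<open>p^n\<close> is the number of
  units of order exactly \<open>p^n\<close>, i.e. the number of solutions of \<open>x^(p^n) = 1\<close> minus that of
  \<open>x^(p^(n-1)) = 1\<close>. In characteristic \<open>p\<close> we have \<open>x^(p^j) - 1 = (x - 1)^(p^j)\<close>, and as \<open>P\<close>
  is prime, \<open>P^\<alpha>\<close> divides \<open>(x - 1)^(p^j)\<close> iff \<open>P^c\<close> divides \<open>x - 1\<close> for \<open>c = \<lceil>\<alpha>/p^j\<rceil>\<close>.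
  The residues modulo \<open>P^\<alpha>\<close> that are \<open>1\<close> modulo \<open>P^c\<close> are the \<open>1 + P^c h\<close> with
  \<open>deg h < d(\<alpha> - c)\<close>, so there are \<open>q^(d(\<alpha> - c))\<close> of them, and each is a unit because it is a
  root of unity.
\<close>

lemma (in group) card_generators_of_cyclic_subgroup:
  assumes fin: "finite (carrier G)" and x: "x \<in> carrier G"
  shows "card {y \<in> generate G {x}. ord y = ord x} = totient (ord x)"
proof -
  have gen: "generate G {x} = {x [^] i | i. i \<in> (UNIV :: nat set)}"
    using generate_pow_on_finite_carrier[OF fin x] .
  have pow_mod: "x [^] i = x [^] (i mod ord x)" for i :: nat
  proof -
    have "x [^] i = x [^] (ord x * (i div ord x)) \<otimes> x [^] (i mod ord x)"
      using x by (simp add: nat_pow_mult)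
    also have "x [^] (ord x * (i div ord x)) = \<one>"
      using x pow_eq_id[of x "ord x * (i div ord x)"] by simp
    finally show ?thesis using x by simp
  qed
  have eq: "{y \<in> generate G {x}. ord y = ord x} = (\<lambda>i::nat. x [^] i) ` totatives (ord x)"
  proof (intro equalityI subsetI)
    fix y assume "y \<in> {y \<in> generate G {x}. ord y = ord x}"
    then obtain i :: nat where y: "y = x [^] (i mod ord x)" and oy: "ord y = ord x"
      using gen pow_mod by auto
    then have "coprime (i mod ord x) (ord x)"
      using pow_ord_eq_ord_iff[OF fin x] by simp
    then show "y \<in> (\<lambda>i. x [^] i) ` totatives (ord x)"
    proof (cases "i mod ord x = 0")
      case True
      then have "ord x = 1" using \<open>coprime (i mod ord x) (ord x)\<close> by simp
      then have "y = x [^] (1::nat)" using y True x ord_eq_1 by simp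
      moreover have "(1::nat) \<in> totatives (ord x)" using \<open>ord x = 1\<close> by (simp add: totatives_def)
      ultimately show ?thesis by blast
    next
      case False
      then show ?thesis using \<open>coprime (i mod ord x) (ord x)\<close> y ord_ge_1[OF fin x]
        by (auto simp: totatives_def)
    qed
  next
    fix y assume "y \<in> (\<lambda>i. x [^] i) ` totatives (ord x)"
    then obtain i where "i \<in> totatives (ord x)" and "y = x [^] i" by auto
    then show "y \<in> {y \<in> generate G {x}. ord y = ord x}"
      using pow_ord_eq_ord_iff[OF fin x, of i] gen by (auto simp: totatives_def)
  qed
  have "inj_on (\<lambda>i::nat. x [^] i) (totatives (ord x))"
    using ord_inj'[OF x] by (rule inj_on_subset) (auto simp: totatives_def)
  then show ?thesis unfolding eq totient_def by (simp add: card_image)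
qed

lemma (in group) card_elements_of_ord:
  assumes fin: "finite (carrier G)"
  shows "card {x \<in> carrier G. ord x = k} = totient k * num_cyclic_subgroups G k"
proof -
  define S where "S = {H. (\<exists>x\<in>carrier G. H = generate G {x}) \<and> card H = k}"
  define gens where "gens H = {y \<in> H. ord y = k}" for H
  have gen_sub: "generate G {x} \<subseteq> carrier G" if "x \<in> carrier G" for x
    using generate_incl that by auto
  have card_gen: "card (generate G {y}) = ord y" if "y \<in> carrier G" for y
    using generate_pow_card[OF that] by simp
  have finS: "finite S"
    by (rule finite_subset[of _ "Pow (carrier G)"]) (use fin gen_sub in \<open>auto simp: S_def\<close>)
  have generated: "generate G {y} = H" if "H \<in> S" "y \<in> H" "ord y = k" for H y
  proof -
    from that(1) obtain x where x: "x \<in> carrier G" "H = generate G {x}" "card H = k"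
      by (auto simp: S_def)
    have "generate G {y} \<subseteq> H"
      using generate_subgroup_incl generate_is_subgroup x that by auto
    moreover have "finite H" using x gen_sub fin finite_subset by metis
    ultimately show ?thesis using card_subset_eq card_gen x that gen_sub by (metis subsetD)
  qed
  have "{x \<in> carrier G. ord x = k} = (\<Union>H\<in>S. gens H)"
  proof (intro equalityI subsetI)
    fix y assume y: "y \<in> {x \<in> carrier G. ord x = k}"
    then have "generate G {y} \<in> S" using card_gen S_def by auto
    moreover have "y \<in> gens (generate G {y})" using y generate.incl[of y "{y}" G] gens_def by auto
    ultimately show "y \<in> (\<Union>H\<in>S. gens H)" by blast
  qed (use gen_sub S_def gens_def in auto)
  then have "card {x \<in> carrier G. ord x = k} = card (\<Union>H\<in>S. gens H)" by simp
  also have "\<dots> = (\<Sum>H\<in>S. card (gens H))"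
  proof (rule card_UN_disjoint[OF finS])
    show "\<forall>H\<in>S. finite (gens H)"
      using fin gen_sub by (auto simp: S_def gens_def intro: finite_subset)
    show "\<forall>H\<in>S. \<forall>H'\<in>S. H \<noteq> H' \<longrightarrow> gens H \<inter> gens H' = {}"
      using generated gens_def by blast
  qed
  also have "\<dots> = (\<Sum>H\<in>S. totient k)"
  proof (rule sum.cong[OF refl])
    fix H assume "H \<in> S"
    then obtain x where "x \<in> carrier G" "H = generate G {x}" "ord x = k"
      using card_gen by (auto simp: S_def)
    then show "card (gens H) = totient k"
      using card_generators_of_cyclic_subgroup[OF fin \<open>x \<in> carrier G\<close>] by (simp add: gens_def)
  qed
  finally show ?thesis by (simp add: num_cyclic_subgroups_def S_def)
qed

lemma prime_power_exact_dvd_iff: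
  assumes p: "prime (p::nat)" and n: "n \<ge> 1"
  shows "(a dvd p ^ n \<and> \<not> a dvd p ^ (n - 1)) \<longleftrightarrow> a = p ^ n"
proof
  assume A: "a dvd p ^ n \<and> \<not> a dvd p ^ (n - 1)"
  then obtain i where i: "i \<le> n" "a = p ^ i" using divides_primepow_nat[OF p] by blast
  moreover have "\<not> i \<le> n - 1" using A i le_imp_power_dvd by blast
  ultimately have "i = n" by linarith
  then show "a = p ^ n" using i by simp
next
  have "p ^ (n - 1) < p ^ n" using n prime_gt_1_nat[OF p] by (intro power_strict_increasing) auto
  then show "a = p ^ n \<Longrightarrow> a dvd p ^ n \<and> \<not> a dvd p ^ (n - 1)"
    using prime_gt_1_nat[OF p] by (auto dest: dvd_imp_le)
qed

lemma (in group) card_elements_of_prime_power_ord: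
  assumes fin: "finite (carrier G)" and p: "prime p" and n: "n \<ge> 1"
  shows "card {x \<in> carrier G. ord x = p ^ n} =
         card {x \<in> carrier G. x [^] (p ^ n) = \<one>} - card {x \<in> carrier G. x [^] (p ^ (n - 1)) = \<one>}"
proof -
  define roots where "roots j = {x \<in> carrier G. x [^] (p ^ j) = \<one>}" for j
  have roots_ord: "roots j = {x \<in> carrier G. ord x dvd p ^ j}" for j
    unfolding roots_def using pow_eq_id by blast
  have "{x \<in> carrier G. ord x = p ^ n} = roots n - roots (n - 1)"
    unfolding roots_ord using prime_power_exact_dvd_iff[OF p n] by blast
  moreover have "roots (n - 1) \<subseteq> roots n"
    unfolding roots_ord using le_imp_power_dvd[of "n - 1" n p] dvd_trans by auto
  moreover have "finite (roots n)" using fin by (simp add: roots_def)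
  ultimately show ?thesis by (simp add: card_Diff_subset finite_subset roots_def)
qed

definition polys_deg_less :: "nat \<Rightarrow> 'a::zero poly set" where
  "polys_deg_less m = {f. \<forall>i\<ge>m. Polynomial.coeff f i = 0}"

lemma polys_deg_less_iff: "f \<in> polys_deg_less m \<longleftrightarrow> f = 0 \<or> degree f < m"
proof
  show "f \<in> polys_deg_less m \<Longrightarrow> f = 0 \<or> degree f < m"
    unfolding polys_deg_less_def using leading_coeff_0_iff not_le by blast
  show "f = 0 \<or> degree f < m \<Longrightarrow> f \<in> polys_deg_less m"
    by (auto simp: polys_deg_less_def coeff_eq_0)
qed

lemma polys_deg_less_Suc:
  "polys_deg_less (Suc m) = (\<lambda>(a, f). pCons a f) ` (UNIV \<times> polys_deg_less m)"
proof (intro equalityI subsetI)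
  fix g :: "'a poly" assume g: "g \<in> polys_deg_less (Suc m)"
  obtain a f where g_eq: "g = pCons a f" by (cases g) auto
  moreover have "f \<in> polys_deg_less m"
  proof (unfold polys_deg_less_def, intro CollectI allI impI)
    fix i assume "m \<le> i"
    then have "Polynomial.coeff g (Suc i) = 0" using g by (simp add: polys_deg_less_def)
    then show "Polynomial.coeff f i = 0" by (simp add: g_eq)
  qed
  ultimately show "g \<in> (\<lambda>(a, f). pCons a f) ` (UNIV \<times> polys_deg_less m)" by auto
qed (auto simp: polys_deg_less_def coeff_pCons split: nat.split)

lemma
  shows finite_polys_deg_less: "finite (polys_deg_less m :: 'a::{zero,finite} poly set)"
    and card_polys_deg_less: "card (polys_deg_less m :: 'a poly set) = card (UNIV :: 'a set) ^ m"
proof (induction m)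
  case 0
  have "polys_deg_less 0 = {0 :: 'a poly}" by (auto simp: polys_deg_less_iff)
  then show "finite (polys_deg_less 0 :: 'a poly set)"
    "card (polys_deg_less 0 :: 'a poly set) = card (UNIV :: 'a set) ^ 0"
    by simp_all
next
  case (Suc m)
  have "inj_on (\<lambda>(a, f). pCons a f) (UNIV \<times> (polys_deg_less m :: 'a poly set))"
    by (auto simp: inj_on_def)
  then show "finite (polys_deg_less (Suc m) :: 'a poly set)"
    "card (polys_deg_less (Suc m) :: 'a poly set) = card (UNIV :: 'a set) ^ Suc m"
    unfolding polys_deg_less_Suc using Suc by (simp_all add: card_image card_cartesian_product)
qed

lemma mod_eq_self_iff_degree_less:
  fixes M x :: "'a::field poly"
  assumes "M \<noteq> 0"
  shows "x mod M = x \<longleftrightarrow> x = 0 \<or> degree x < degree M"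
proof
  assume "x mod M = x"
  then show "x = 0 \<or> degree x < degree M"
    using degree_mod_less[OF assms, of x] by (cases "x mod M = 0") auto
qed (auto simp: mod_poly_less)

lemma card_residues_congruent_one:
  fixes M D :: "'a::{field,finite} poly"
  assumes M: "degree M > 0" and D: "D \<noteq> 0" "degree D \<le> degree M"
  shows "card {x. x mod M = x \<and> D dvd x - 1} = card (UNIV :: 'a set) ^ (degree M - degree D)"
proof -
  have M0: "M \<noteq> 0" using M by auto
  have "{x. x mod M = x \<and> D dvd x - 1} = (\<lambda>h. 1 + D * h) ` polys_deg_less (degree M - degree D)"
  proof (intro equalityI subsetI)
    fix x assume x: "x \<in> {x. x mod M = x \<and> D dvd x - 1}"
    then obtain h where h: "x - 1 = D * h" by blast
    have "x - 1 = 0 \<or> degree (x - 1) < degree M"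
      using x M mod_eq_self_iff_degree_less[OF M0, of x] degree_diff_less[of x "degree M" 1]
      by (cases "x - 1 = 0") auto
    then have "h \<in> polys_deg_less (degree M - degree D)"
      using h D by (cases "h = 0") (auto simp: polys_deg_less_iff degree_mult_eq)
    moreover have "x = 1 + D * h" using h by (simp add: algebra_simps)
    ultimately show "x \<in> (\<lambda>h. 1 + D * h) ` polys_deg_less (degree M - degree D)" by blast
  next
    fix x assume "x \<in> (\<lambda>h. 1 + D * h) ` polys_deg_less (degree M - degree D)"
    then obtain h where h: "h = 0 \<or> degree h < degree M - degree D" and x: "x = 1 + D * h"
      by (auto simp: polys_deg_less_iff)
    then have "degree (D * h) < degree M" using D M by (cases "h = 0") (auto simp: degree_mult_eq)
    then have "degree x < degree M" using x M degree_add_less[of 1 "degree M"] by auto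
    then show "x \<in> {x. x mod M = x \<and> D dvd x - 1}"
      using x mod_eq_self_iff_degree_less[OF M0] by simp
  qed
  moreover have "inj_on (\<lambda>h. 1 + D * h) (polys_deg_less (degree M - degree D))"
    using D by (auto simp: inj_on_def)
  ultimately show ?thesis by (simp add: card_image card_polys_deg_less)
qed

lemma monoid_quot_poly_ring: "monoid (quot_poly_ring M)"
  by unfold_locales
    (auto simp: quot_poly_ring_def mod_mult_left_eq mod_mult_right_eq mult.assoc)

lemma group_quot_units: "group (quot_units M)"
  unfolding quot_units_def by (rule monoid.units_group[OF monoid_quot_poly_ring])

lemma nat_pow_quot_poly_ring: "x [^]\<^bsub>quot_poly_ring M\<^esub> (n::nat) = x ^ n mod M"
  by (induction n) (auto simp: quot_poly_ring_def mod_mult_left_eq mod_mult_right_eq mult.commute)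

lemma carrier_quot_units_subset: "carrier (quot_units M) \<subseteq> {x. x mod M = x}"
  by (auto simp: quot_units_def units_of_carrier Units_def quot_poly_ring_def)

lemma finite_carrier_quot_units:
  fixes M :: "'a::{field,finite} poly"
  assumes "M \<noteq> 0"
  shows "finite (carrier (quot_units M))"
proof (rule finite_subset[OF _ finite_polys_deg_less])
  show "carrier (quot_units M) \<subseteq> polys_deg_less (degree M)"
    using mod_eq_self_iff_degree_less[OF assms]
    by (auto simp: polys_deg_less_iff dest!: subsetD[OF carrier_quot_units_subset])
qed

lemma quot_units_roots_of_unity:
  fixes M :: "'a::field poly"
  assumes "m > 0"
  shows "{x \<in> carrier (quot_units M). x [^]\<^bsub>quot_units M\<^esub> m = \<one>\<^bsub>quot_units M\<^esub>}
        = {x. x mod M = x \<and> x ^ m mod M = 1 mod M}"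
proof -
  interpret R: monoid "quot_poly_ring M" by (rule monoid_quot_poly_ring)
  have pow_units: "x [^]\<^bsub>quot_units M\<^esub> m = x ^ m mod M" if "x \<in> Units (quot_poly_ring M)" for x
    using that by (simp add: quot_units_def R.units_of_pow nat_pow_quot_poly_ring)
  have "x \<in> Units (quot_poly_ring M)" if "x mod M = x" "x ^ m mod M = 1 mod M" for x
  proof -
    have "x * x ^ (m - 1) = x ^ m" using assms by (simp flip: power_Suc)
    then have "x * (x ^ (m - 1) mod M) mod M = 1 mod M" "(x ^ (m - 1) mod M) * x mod M = 1 mod M"
      using that by (simp_all add: mod_mult_right_eq mod_mult_left_eq mult.commute)
    then show ?thesis
      using that by (auto simp: Units_def quot_poly_ring_def intro!: exI[of _ "x ^ (m - 1) mod M"])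
  qed
  then show ?thesis
    using carrier_quot_units_subset[of M] pow_units
    by (auto simp: quot_units_def units_of_carrier units_of_one quot_poly_ring_def)
qed

lemma nat_ceiling_divide_le_iff:
  assumes "m > 0"
  shows "nat \<lceil>real a / real m\<rceil> \<le> k \<longleftrightarrow> a \<le> m * k"
proof -
  have "nat \<lceil>real a / real m\<rceil> \<le> k \<longleftrightarrow> real a / real m \<le> real k"
    by (simp add: nat_le_iff ceiling_le_iff)
  also have "\<dots> \<longleftrightarrow> a \<le> m * k"
    using assms by (simp add: pos_divide_le_eq mult.commute flip: of_nat_mult)
  finally show ?thesis .
qed

lemma nat_ceiling_divide_antimono:
  assumes "0 < m" "m \<le> m'"
  shows "nat \<lceil>real a / real m'\<rceil> \<le> nat \<lceil>real a / real m\<rceil>"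
proof -
  have "a \<le> m * nat \<lceil>real a / real m\<rceil>" using nat_ceiling_divide_le_iff[OF assms(1)] by blast
  also have "\<dots> \<le> m' * nat \<lceil>real a / real m\<rceil>" using assms(2) by simp
  finally show ?thesis using assms by (subst nat_ceiling_divide_le_iff) auto
qed

lemma prime_elem_power_Suc_dvd:
  fixes P g :: "'a::idom"
  assumes P: "prime_elem P" and "P ^ k dvd g" and "P ^ Suc (m * k) dvd g ^ m"
  shows "P ^ Suc k dvd g"
proof -
  obtain h where g: "g = P ^ k * h" using assms(2) by blast
  have "P ^ (m * k) * P dvd P ^ (m * k) * h ^ m"
    using assms(3) by (simp add: g power_mult_distrib mult.commute flip: power_mult)
  then have "P dvd h ^ m" using P by (simp add: prime_elem_def)
  then have "P dvd h" using P prime_elem_dvd_power by blast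
  then show ?thesis by (simp add: g)
qed

lemma prime_power_dvd_power_iff:
  fixes P g :: "'a::idom"
  assumes P: "prime_elem P" and m: "m > 0"
  shows "P ^ a dvd g ^ m \<longleftrightarrow> P ^ nat \<lceil>real a / real m\<rceil> dvd g"
proof
  define c where "c = nat \<lceil>real a / real m\<rceil>"
  have a_le: "k < c \<longleftrightarrow> Suc (m * k) \<le> a" for k
    using nat_ceiling_divide_le_iff[OF m, of a k] unfolding c_def by (metis Suc_le_eq not_le)
  assume dvd: "P ^ a dvd g ^ m"
  have "k \<le> c \<Longrightarrow> P ^ k dvd g" for k
  proof (induction k)
    case (Suc k)
    then have "P ^ Suc (m * k) dvd g ^ m"
      using a_le[of k] dvd le_imp_power_dvd dvd_trans by (metis Suc_le_lessD)
    then show ?case using Suc prime_elem_power_Suc_dvd[OF P] by simp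
  qed simp
  then show "P ^ c dvd g" by simp
next
  assume "P ^ nat \<lceil>real a / real m\<rceil> dvd g"
  then have "(P ^ nat \<lceil>real a / real m\<rceil>) ^ m dvd g ^ m" by (rule dvd_power_same)
  moreover have "a \<le> m * nat \<lceil>real a / real m\<rceil>"
    by (rule nat_ceiling_divide_le_iff[OF m, THEN iffD1, OF order_refl])
  ultimately show "P ^ a dvd g ^ m"
    by (metis dvd_trans le_imp_power_dvd power_mult mult.commute)
qed

lemma power_CHAR_power_minus_one:
  fixes x :: "'a::comm_ring_1"
  assumes "prime CHAR('a)"
  shows "x ^ (CHAR('a) ^ j) - 1 = (x - 1) ^ (CHAR('a) ^ j)"
  using freshmans_dream'[OF assms refl, of "x - 1" 1 j] by simp

lemma CHAR_eq_prime_of_card: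
  assumes "prime p" "card (UNIV :: 'a::field set) = p ^ s"
  shows "CHAR('a) = p"
proof -
  have "card (UNIV :: 'a set) \<noteq> 0" using assms by simp
  then have pc: "prime CHAR('a)"
    by (intro prime_CHAR_semidom finite_imp_CHAR_pos) (simp add: card_eq_0_iff)
  moreover have "CHAR('a) dvd p ^ s" using CHAR_dvd_CARD[where 'a='a] assms(2) by simp
  ultimately show ?thesis using assms(1) prime_dvd_power primes_dvd_imp_eq by blast
qed

lemma card_quot_units_roots_of_prime_power:
  fixes P :: "'a::{field,finite} poly"
  assumes P: "irreducible P" and ch: "CHAR('a) = p" and "prime p"
  shows "card {x \<in> carrier (quot_units (P ^ a)). x [^]\<^bsub>quot_units (P ^ a)\<^esub> (p ^ j) = \<one>\<^bsub>quot_units (P ^ a)\<^esub>}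
         = card (UNIV :: 'a set) ^ (degree P * (a - nat \<lceil>real a / real (p ^ j)\<rceil>))"
proof -
  define c where "c = nat \<lceil>real a / real (p ^ j)\<rceil>"
  have pj: "p ^ j > 0" using \<open>prime p\<close> prime_gt_0_nat by simp
  have P': "prime_elem P" using P by (rule field_poly_irreducible_imp_prime)
  then have P0: "P \<noteq> 0" by auto
  then have dP: "degree P > 0"
    using P' prime_elem_not_unit is_unit_iff_degree by (metis neq0_conv)
  have c: "c \<le> a" using nat_ceiling_divide_le_iff[OF pj, of a a] pj unfolding c_def by simp
  have "x ^ (p ^ j) mod P ^ a = 1 mod P ^ a \<longleftrightarrow> P ^ c dvd x - 1" for x
  proof -
    have "x ^ (p ^ j) mod P ^ a = 1 mod P ^ a \<longleftrightarrow> P ^ a dvd (x - 1) ^ (p ^ j)"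
      using power_CHAR_power_minus_one[of x j] ch \<open>prime p\<close> by (simp add: mod_eq_dvd_iff)
    also have "\<dots> \<longleftrightarrow> P ^ c dvd x - 1"
      unfolding c_def by (rule prime_power_dvd_power_iff[OF P' pj])
    finally show ?thesis .
  qed
  then have "{x \<in> carrier (quot_units (P ^ a)). x [^]\<^bsub>quot_units (P ^ a)\<^esub> (p ^ j) = \<one>\<^bsub>quot_units (P ^ a)\<^esub>}
             = {x. x mod P ^ a = x \<and> P ^ c dvd x - 1}"
    by (simp add: quot_units_roots_of_unity[OF pj])
  also have "card \<dots> = card (UNIV :: 'a set) ^ (degree P * (a - c))"
  proof (cases "a = 0")
    case True
    then have "{x. x mod P ^ a = x \<and> P ^ c dvd x - 1} = {0}"
      using c by auto
    then show ?thesis using True by simp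
  next
    case False
    then show ?thesis
      using card_residues_congruent_one[of "P ^ a" "P ^ c"] c P0 dP
      by (simp add: degree_power_eq mult.commute[of "degree P"] diff_mult_distrib)
  qed
  finally show ?thesis by (simp add: c_def)
qed

lemma totient_mult_num_cyclic_subgroups_quot_units:
  fixes P :: "'a::{field,finite} poly"
  assumes P: "irreducible P" and ch: "CHAR('a) = p" and p: "prime p" and n: "n \<ge> 1"
  shows "totient (p ^ n) * num_cyclic_subgroups (quot_units (P ^ a)) (p ^ n)
         = card (UNIV :: 'a set) ^ (degree P * (a - nat \<lceil>real a / real (p ^ n)\<rceil>))
           - card (UNIV :: 'a set) ^ (degree P * (a - nat \<lceil>real a / real (p ^ (n - 1))\<rceil>))"
proof -
  interpret G: group "quot_units (P ^ a)" by (rule group_quot_units)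
  have fin: "finite (carrier (quot_units (P ^ a)))"
    using P by (intro finite_carrier_quot_units) auto
  show ?thesis
    using G.card_elements_of_ord[OF fin, of "p ^ n"] G.card_elements_of_prime_power_ord[OF fin p n]
      card_quot_units_roots_of_prime_power[OF P ch p] by simp
qed

theorem proposition5p1:
  fixes P :: "'a::{field,finite} poly" and p s q d n \<alpha> :: nat
  assumes "prime p"
    and "q = p ^ s"
    and "card (UNIV :: 'a set) = q"
    and "irreducible P" and "lead_coeff P = 1" and "degree P = d"
    and "n \<ge> 1"
  shows "real (num_cyclic_subgroups (quot_units (P ^ \<alpha>)) (p ^ n)) =
           (real q ^ (d * (\<alpha> - nat \<lceil>real \<alpha> / real p ^ n\<rceil>))
            - real q ^ (d * (\<alpha> - nat \<lceil>real \<alpha> / real p ^ (n - 1)\<rceil>)))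
           / (real p ^ (n - 1) * (real p - 1))
    \<and> real (num_cyclic_subgroups (quot_units (P ^ \<alpha>)) (p ^ n)) =
           real q ^ (d * (\<alpha> - nat \<lceil>real \<alpha> / real p ^ (n - 1)\<rceil>))
            * (real q ^ (d * (nat \<lceil>real \<alpha> / real p ^ (n - 1)\<rceil>
                                     - nat \<lceil>real \<alpha> / real p ^ n\<rceil>)) - 1)
           / (real p ^ (n - 1) * (real p - 1))"
proof -
  define N where "N = num_cyclic_subgroups (quot_units (P ^ \<alpha>)) (p ^ n)"
  define c0 where "c0 = nat \<lceil>real \<alpha> / real (p ^ n)\<rceil>"
  define c1 where "c1 = nat \<lceil>real \<alpha> / real (p ^ (n - 1))\<rceil>"
  have p1: "p > 1" using assms(1) prime_gt_1_nat by blast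
  have "c0 \<le> c1"
    unfolding c0_def c1_def using p1 by (intro nat_ceiling_divide_antimono power_increasing) auto
  moreover have "c1 \<le> \<alpha>"
    using nat_ceiling_divide_antimono[of 1 "p ^ (n - 1)" \<alpha>] p1 by (simp add: c1_def)
  ultimately have exps: "d * (\<alpha> - c0) = d * (\<alpha> - c1) + d * (c1 - c0)"
    by (simp flip: distrib_left)
  have "CHAR('a) = p" using CHAR_eq_prime_of_card assms(1-3) by blast
  then have "totient (p ^ n) * N = q ^ (d * (\<alpha> - c0)) - q ^ (d * (\<alpha> - c1))"
    using totient_mult_num_cyclic_subgroups_quot_units[OF assms(4) _ assms(1,7), of \<alpha>] assms(3,6)
    by (simp add: N_def c0_def c1_def)
  moreover have "q ^ (d * (\<alpha> - c1)) \<le> q ^ (d * (\<alpha> - c0))"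
    using p1 assms(2) exps by (intro power_increasing) auto
  ultimately have "real (totient (p ^ n) * N) = real q ^ (d * (\<alpha> - c0)) - real q ^ (d * (\<alpha> - c1))"
    by (simp only: of_nat_diff of_nat_power)
  then have "real p ^ (n - 1) * (real p - 1) * real N
      = real q ^ (d * (\<alpha> - c0)) - real q ^ (d * (\<alpha> - c1))"
    using totient_prime_power[OF assms(1)] assms(7) p1 by (simp add: of_nat_diff)
  moreover have "real p ^ (n - 1) * (real p - 1) \<noteq> 0" using p1 by simp
  ultimately have "real N = (real q ^ (d * (\<alpha> - c0)) - real q ^ (d * (\<alpha> - c1)))
      / (real p ^ (n - 1) * (real p - 1))"
    by (simp add: eq_divide_eq mult.commute)
  moreover have "real q ^ (d * (\<alpha> - c0)) - real q ^ (d * (\<alpha> - c1))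
      = real q ^ (d * (\<alpha> - c1)) * (real q ^ (d * (c1 - c0)) - 1)"
    unfolding exps power_add by (simp add: right_diff_distrib)
  ultimately show ?thesis by (simp add: N_def c0_def c1_def)
qed

end
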